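(* Let $k\geq 2$ and $p\geq 0$ be integers and let $n=2(p+1)k+2$. Let \[ G=K_{1}\vee\big((pK_{2k})\cup K_{2k+1}\big), \] i.e. the graph obtained by taking the disjoint union of $p$ copies of $K_{2k}$ and one copy of $K_{2k+1}$ and adding one new vertex adjacent to all of its vertices. If $n\geq 6k+13$, then $q(G)<n+2k-2$.
   Context: All graphs are finite and simple. $K_r$ denotes the complete graph on $r$ vertices. For a graph $G$, the signless Laplacian is $Q(G)=D(G)+A(G)$, where $D(G)$ is the diagonal matrix of vertex degrees and $A(G)$ is the adjacency matrix; $q(G)$ denotes the largest eigenvalue of $Q(G)$. *)

theory Defs
  imports "Jordan_Normal_Form.Char_Poly"
begin

definition simple_graph :: "nat \<Rightarrow> (nat \<Rightarrow> nat \<Rightarrow> bool) \<Rightarrow> bool" where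
  "simple_graph N E \<longleftrightarrow> (\<forall>i<N. \<forall>j<N. E i j = E j i) \<and> (\<forall>i<N. \<not> E i i)"

definition degree :: "nat \<Rightarrow> (nat \<Rightarrow> nat \<Rightarrow> bool) \<Rightarrow> nat \<Rightarrow> nat" where
  "degree N E i = card {j. j < N \<and> E i j}"

definition adj_matrix :: "nat \<Rightarrow> (nat \<Rightarrow> nat \<Rightarrow> bool) \<Rightarrow> real mat" where
  "adj_matrix N E = mat N N (\<lambda>(i,j). if E i j then 1 else 0)"

definition deg_matrix :: "nat \<Rightarrow> (nat \<Rightarrow> nat \<Rightarrow> bool) \<Rightarrow> real mat" where
  "deg_matrix N E = mat N N (\<lambda>(i,j). if i = j then real (degree N E i) else 0)"

definition signless_laplacian :: "nat \<Rightarrow> (nat \<Rightarrow> nat \<Rightarrow> bool) \<Rightarrow> real mat" where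
  "signless_laplacian N E = deg_matrix N E + adj_matrix N E"

text \<open>q(G): the largest eigenvalue of Q(G) (Q is real symmetric, so all eigenvalues are real).\<close>
definition q_index :: "nat \<Rightarrow> (nat \<Rightarrow> nat \<Rightarrow> bool) \<Rightarrow> real" where
  "q_index N E = Max {l. eigenvalue (signless_laplacian N E) l}"

text \<open>The graph K_1 join ((p K_{2k}) union K_{2k+1}) on vertices {0..<2(p+1)k+2}:
  vertex 0 is the apex; a vertex v \<ge> 1 lies in clique number min ((v-1) div (2k)) p,
  cliques 0..p-1 have 2k vertices, clique p has the last 2k+1 vertices.\<close>
definition clique_of :: "nat \<Rightarrow> nat \<Rightarrow> nat \<Rightarrow> nat" where
  "clique_of k p v = min ((v - 1) div (2 * k)) p"

definition join_graph :: "nat \<Rightarrow> nat \<Rightarrow> nat \<Rightarrow> nat \<Rightarrow> bool" where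
  "join_graph k p i j \<longleftrightarrow> i \<noteq> j \<and> (i = 0 \<or> j = 0 \<or> clique_of k p i = clique_of k p j)"

end

theory Submission
  imports Defs
begin

(*
  G is a cone over disjoint cliques. If Q v = l v with l + 1 larger than twice every clique
  size, then each leaf entry is determined by the apex entry, v_i (l + 1 - 2 s_i) = v_0,
  where s_i is the size of the clique of i; the apex row then yields the secular equation
  l - n + 1 = sum_i 1 / (l + 1 - 2 s_i) <= (n - 1) / (l - 4k - 1).
  For l >= n + 2k - 2 and n >= 6k + 13 this fails. The spectrum is nonempty since
  e_a - e_b is an eigenvector for two vertices a, b of one clique.
*)

lemma finite_eigenvalues:
  assumes "(A :: 'a :: field mat) \<in> carrier_mat n n"
  shows "finite {l. eigenvalue A l}"
proof -
  have "char_poly A \<noteq> 0"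
    using degree_monic_char_poly[OF assms] by (metis coeff_0 zero_neq_one)
  then have "finite {x. poly (char_poly A) x = 0}" by (rule poly_roots_finite)
  then show ?thesis by (simp add: eigenvalue_root_char_poly[OF assms])
qed

lemma signless_laplacian_carrier_mat [simp]: "signless_laplacian N E \<in> carrier_mat N N"
  unfolding signless_laplacian_def deg_matrix_def adj_matrix_def by simp

lemma dim_row_signless_laplacian [simp]: "dim_row (signless_laplacian N E) = N"
  using carrier_matD(1)[OF signless_laplacian_carrier_mat] .

lemma q_index_less:
  assumes "eigenvalue (signless_laplacian N E) l"
    and "\<And>l. eigenvalue (signless_laplacian N E) l \<Longrightarrow> l < B"
  shows "q_index N E < B"
proof -
  have "finite {l. eigenvalue (signless_laplacian N E) l}"
    by (rule finite_eigenvalues[OF signless_laplacian_carrier_mat])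
  then show ?thesis
    unfolding q_index_def using assms by (subst Max_less_iff) auto
qed

lemma signless_laplacian_mult_vec_nth:
  assumes v: "v \<in> carrier_vec N" and i: "i < N"
  shows "(signless_laplacian N E *\<^sub>v v) $ i
         = real (degree N E i) * v $ i + (\<Sum>j\<in>{j. j < N \<and> E i j}. v $ j)"
proof -
  have "(signless_laplacian N E *\<^sub>v v) $ i
      = (\<Sum>j<N. (if i = j then real (degree N E i) * v $ j else 0) + (if E i j then v $ j else 0))"
    using v i unfolding signless_laplacian_def deg_matrix_def adj_matrix_def
    by (auto simp: scalar_prod_def lessThan_atLeast0 algebra_simps intro!: sum.cong)
  also have "\<dots> = real (degree N E i) * v $ i + (\<Sum>j<N. if E i j then v $ j else 0)"
    using i by (simp add: sum.distrib sum.delta)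
  also have "(\<Sum>j<N. if E i j then v $ j else 0) = (\<Sum>j\<in>{j. j < N \<and> E i j}. v $ j)"
    by (simp add: sum.inter_filter[symmetric] lessThan_def Collect_conj_eq Int_commute)
  finally show ?thesis .
qed

definition cone_of_cliques :: "(nat \<Rightarrow> nat) \<Rightarrow> nat \<Rightarrow> nat \<Rightarrow> bool" where
  "cone_of_cliques c i j \<longleftrightarrow> i \<noteq> j \<and> (i = 0 \<or> j = 0 \<or> c i = c j)"

definition clique_class :: "nat \<Rightarrow> (nat \<Rightarrow> nat) \<Rightarrow> nat \<Rightarrow> nat set" where
  "clique_class N c i = {j. 1 \<le> j \<and> j < N \<and> c j = c i}"

lemma join_graph_eq_cone_of_cliques: "join_graph k p = cone_of_cliques (clique_of k p)"
  by (simp add: fun_eq_iff join_graph_def cone_of_cliques_def)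

lemma finite_clique_class: "finite (clique_class N c i)"
  unfolding clique_class_def by auto

lemma clique_class_subset: "clique_class N c i \<subseteq> {1..<N}"
  unfolding clique_class_def by auto

lemma clique_class_eq: "j \<in> clique_class N c i \<Longrightarrow> clique_class N c j = clique_class N c i"
  unfolding clique_class_def by auto

lemma self_in_clique_class: "1 \<le> i \<Longrightarrow> i < N \<Longrightarrow> i \<in> clique_class N c i"
  unfolding clique_class_def by auto

lemma cone_of_cliques_neighbours:
  assumes "1 \<le> i" "i < N"
  shows "{j. j < N \<and> cone_of_cliques c i j} = insert 0 (clique_class N c i - {i})"
  using assms unfolding clique_class_def cone_of_cliques_def by auto

lemma cone_of_cliques_neighbours_apex: "{j. j < N \<and> cone_of_cliques c 0 j} = {1..<N}"
  unfolding cone_of_cliques_def by auto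

lemma degree_cone_of_cliques:
  assumes "1 \<le> i" "i < N"
  shows "degree N (cone_of_cliques c) i = card (clique_class N c i)"
proof -
  have "0 \<notin> clique_class N c i" unfolding clique_class_def by auto
  moreover have "card (clique_class N c i) > 0"
    using self_in_clique_class[OF assms] finite_clique_class card_gt_0_iff by blast
  ultimately show ?thesis
    by (simp add: degree_def cone_of_cliques_neighbours[OF assms] finite_clique_class
        card_Diff_singleton self_in_clique_class[OF assms])
qed

lemma degree_cone_of_cliques_apex: "degree N (cone_of_cliques c) 0 = N - 1"
  unfolding degree_def cone_of_cliques_neighbours_apex by simp

lemma cone_of_cliques_mult_vec_nth:
  assumes v: "v \<in> carrier_vec N" and i: "1 \<le> i" "i < N"
  shows "(signless_laplacian N (cone_of_cliques c) *\<^sub>v v) $ i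
         = (real (card (clique_class N c i)) - 1) * v $ i + v $ 0
           + (\<Sum>j\<in>clique_class N c i. v $ j)"
proof -
  have "0 \<notin> clique_class N c i" unfolding clique_class_def by auto
  then have "(\<Sum>j\<in>insert 0 (clique_class N c i - {i}). v $ j)
      = v $ 0 + (\<Sum>j\<in>clique_class N c i. v $ j) - v $ i"
    by (simp add: finite_clique_class sum_diff1 self_in_clique_class[OF i])
  then show ?thesis
    using signless_laplacian_mult_vec_nth[OF v i(2), of "cone_of_cliques c"]
    by (simp add: cone_of_cliques_neighbours[OF i] degree_cone_of_cliques[OF i] algebra_simps)
qed

lemma cone_of_cliques_mult_vec_apex:
  assumes v: "v \<in> carrier_vec N" and "0 < N"
  shows "(signless_laplacian N (cone_of_cliques c) *\<^sub>v v) $ 0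
         = (real N - 1) * v $ 0 + (\<Sum>j\<in>{1..<N}. v $ j)"
  using signless_laplacian_mult_vec_nth[OF assms, of "cone_of_cliques c"] assms(2)
  by (simp add: cone_of_cliques_neighbours_apex degree_cone_of_cliques_apex of_nat_diff)

lemma cone_of_cliques_eigenvector_nth:
  assumes v: "v \<in> carrier_vec N"
    and ev: "signless_laplacian N (cone_of_cliques c) *\<^sub>v v = l \<cdot>\<^sub>v v"
    and i: "1 \<le> i" "i < N"
    and pos: "2 * real (card (clique_class N c i)) < l + 1"
  shows "v $ i * (l + 1 - 2 * real (card (clique_class N c i))) = v $ 0"
proof -
  define K where "K = clique_class N c i"
  define s where "s = real (card K)"
  define T where "T = (\<Sum>j\<in>K. v $ j)"
  have row: "(l + 1 - s) * v $ j = v $ 0 + T" if j: "j \<in> K" for j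
  proof -
    have "1 \<le> j" "j < N" using j clique_class_subset[of N c i] unfolding K_def by auto
    moreover have "clique_class N c j = K" using j clique_class_eq unfolding K_def by blast
    ultimately show ?thesis
      using cone_of_cliques_mult_vec_nth[OF v, of j c] ev v
      unfolding s_def T_def by (auto simp: algebra_simps)
  qed
  \<comment> \<open>summing the rows of the clique determines its total weight T\<close>
  have "(l + 1 - s) * T = s * (v $ 0 + T)"
    unfolding T_def s_def by (simp add: sum_distrib_left row[unfolded T_def s_def])
  then have T: "T * (l + 1 - 2 * s) = s * v $ 0" by (simp add: algebra_simps)
  have "(l + 1 - s) * (v $ i * (l + 1 - 2 * s)) = (v $ 0 + T) * (l + 1 - 2 * s)"
    using row[of i] self_in_clique_class[OF i] unfolding K_def by simp
  also have "\<dots> = (l + 1 - s) * v $ 0" using T by (simp add: algebra_simps)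
  finally have "(l + 1 - s) * (v $ i * (l + 1 - 2 * s)) = (l + 1 - s) * v $ 0" .
  moreover have "l + 1 - s > 0" using pos unfolding s_def K_def by simp
  ultimately show ?thesis unfolding s_def K_def by simp
qed

lemma cone_of_cliques_secular_equation:
  assumes "eigenvalue (signless_laplacian N (cone_of_cliques c)) l"
    and pos: "\<And>i. 2 * real (card (clique_class N c i)) < l + 1"
  shows "l - real N + 1 = (\<Sum>j\<in>{1..<N}. 1 / (l + 1 - 2 * real (card (clique_class N c j))))"
proof -
  define d where "d j = l + 1 - 2 * real (card (clique_class N c j))" for j
  obtain v where v: "v \<in> carrier_vec N" and "v \<noteq> 0\<^sub>v N"
    and ev: "signless_laplacian N (cone_of_cliques c) *\<^sub>v v = l \<cdot>\<^sub>v v"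
    using assms(1) unfolding eigenvalue_def eigenvector_def dim_row_signless_laplacian by blast
  have leaf: "v $ j = v $ 0 / d j" if "j \<in> {1..<N}" for j
    using cone_of_cliques_eigenvector_nth[OF v ev _ _ pos] that pos[of j]
    by (auto simp: d_def field_simps)
  have "v $ 0 \<noteq> 0"
  proof
    assume "v $ 0 = 0"
    then have "v $ j = 0" if "j < N" for j
      using leaf[of j] that by (cases "j = 0") auto
    then have "v = 0\<^sub>v N" using v by (intro eq_vecI) auto
    with \<open>v \<noteq> 0\<^sub>v N\<close> show False ..
  qed
  have "0 < N" using v \<open>v \<noteq> 0\<^sub>v N\<close> by (intro Nat.gr0I) auto
  have "l * v $ 0 = (real N - 1) * v $ 0 + (\<Sum>j\<in>{1..<N}. v $ 0 / d j)"
    using cone_of_cliques_mult_vec_apex[OF v \<open>0 < N\<close>, of c] ev v \<open>0 < N\<close> leaf by simp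
  also have "\<dots> = v $ 0 * (real N - 1 + (\<Sum>j\<in>{1..<N}. 1 / d j))"
    by (simp add: sum_distrib_left algebra_simps)
  finally show ?thesis
    using \<open>v $ 0 \<noteq> 0\<close> unfolding d_def by (simp add: mult.commute)
qed

lemma cone_of_cliques_eigenvalue_bound:
  assumes ev: "eigenvalue (signless_laplacian N (cone_of_cliques c)) l"
    and card: "\<And>i. card (clique_class N c i) \<le> s"
    and pos: "2 * real s < l + 1"
  shows "(l - real N + 1) * (l + 1 - 2 * real s) \<le> real N - 1"
proof -
  have pos_class: "2 * real (card (clique_class N c i)) < l + 1" for i
    using card[of i] pos by (smt (verit) of_nat_le_iff)
  note secular = cone_of_cliques_secular_equation[OF ev pos_class]
  have "0 < N"
  proof (rule ccontr)
    assume "\<not> 0 < N"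
    then have "l + 1 = 0" using secular by simp
    with pos show False by simp
  qed
  have "l - real N + 1 \<le> (\<Sum>j\<in>{1..<N}. 1 / (l + 1 - 2 * real s))"
    unfolding secular
  proof (rule sum_mono)
    fix j
    show "1 / (l + 1 - 2 * real (card (clique_class N c j))) \<le> 1 / (l + 1 - 2 * real s)"
      using card[of j] pos by (intro divide_left_mono) auto
  qed
  also have "\<dots> = (real N - 1) / (l + 1 - 2 * real s)"
    using \<open>0 < N\<close> by (simp add: of_nat_diff)
  finally show ?thesis using pos by (simp add: pos_le_divide_eq)
qed

lemma cone_of_cliques_eigenvalue_clique_pair:
  assumes a: "1 \<le> a" "a < N" and b: "b \<in> clique_class N c a" "b \<noteq> a"
  shows "eigenvalue (signless_laplacian N (cone_of_cliques c)) (real (card (clique_class N c a)) - 1)"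
proof -
  define v :: "real vec" where "v = vec N (\<lambda>j. if j = a then 1 else if j = b then -1 else 0)"
  define lam where "lam = real (card (clique_class N c a)) - 1"
  have v: "v \<in> carrier_vec N" unfolding v_def by simp
  have "1 \<le> b" "b < N" using b clique_class_subset[of N c a] by auto
  have sum_zero: "(\<Sum>j\<in>A. v $ j) = 0"
    if A: "finite A" "A \<subseteq> {..<N}" and ab: "a \<in> A \<longleftrightarrow> b \<in> A" for A
  proof -
    have "(\<Sum>j\<in>A. v $ j) = (\<Sum>j\<in>A. (if j = a then 1 else 0) - (if j = b then 1 else 0))"
      using A b(2) by (intro sum.cong) (auto simp: v_def)
    also have "\<dots> = 0" using A ab by (simp add: sum_subtractf sum.delta)
    finally show ?thesis .
  qed
  have class_ab: "a \<in> clique_class N c i \<longleftrightarrow> b \<in> clique_class N c i" for i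
    using b(1) clique_class_eq by (metis self_in_clique_class[OF a])
  have class_sum: "(\<Sum>j\<in>clique_class N c i. v $ j) = 0" for i
    using clique_class_subset[of N c i]
    by (intro sum_zero[OF finite_clique_class]) (auto simp: class_ab)
  have "signless_laplacian N (cone_of_cliques c) *\<^sub>v v = lam \<cdot>\<^sub>v v"
  proof (rule eq_vecI)
    fix i assume "i < dim_vec (lam \<cdot>\<^sub>v v)"
    then have i: "i < N" using v by simp
    have v0: "v $ 0 = 0" using a \<open>1 \<le> b\<close> a(2) by (auto simp: v_def)
    show "(signless_laplacian N (cone_of_cliques c) *\<^sub>v v) $ i = (lam \<cdot>\<^sub>v v) $ i"
    proof (cases "i = 0")
      case True
      then show ?thesis
        using cone_of_cliques_mult_vec_apex[OF v, of c] sum_zero[of "{1..<N}"] a \<open>1 \<le> b\<close> \<open>b < N\<close> v v0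
        by (auto simp: subset_eq)
    next
      case False
      then have "(signless_laplacian N (cone_of_cliques c) *\<^sub>v v) $ i
          = (real (card (clique_class N c i)) - 1) * v $ i"
        using cone_of_cliques_mult_vec_nth[OF v, of i c] i v0
          class_sum by auto
      also have "\<dots> = lam * v $ i"
        using clique_class_eq[OF b(1)] i unfolding lam_def v_def by auto
      finally show ?thesis using i v by simp
    qed
  qed (use v in simp)
  moreover have "v $ a = 1" using a by (simp add: v_def)
  then have "v \<noteq> 0\<^sub>v N" using a by auto
  ultimately show ?thesis
    using v unfolding eigenvalue_def eigenvector_def dim_row_signless_laplacian lam_def by blast
qed

lemma card_clique_class_join_graph:
  assumes k: "1 \<le> k" and N: "N = 2 * (p + 1) * k + 2"
  shows "card (clique_class N (clique_of k p) i) \<le> 2 * k + 1"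
proof -
  define c where "c = clique_of k p i"
  have "clique_class N (clique_of k p) i \<subseteq> {2 * k * c + 1 ..< 2 * k * c + 2 * k + 2}"
  proof
    fix j assume "j \<in> clique_class N (clique_of k p) i"
    then have j: "1 \<le> j" "j < N" and c: "c = min ((j - 1) div (2 * k)) p"
      unfolding clique_class_def c_def clique_of_def by auto
    have "2 * k * c \<le> 2 * k * ((j - 1) div (2 * k))" using c by simp
    also have "\<dots> \<le> j - 1" by simp
    finally have lower: "2 * k * c + 1 \<le> j" using j by linarith
    have "j - 1 < 2 * k * c + 2 * k + 1"
    proof (cases "(j - 1) div (2 * k) < p")
      case True
      then have "c = (j - 1) div (2 * k)" using c by simp
      then have "j - 1 = 2 * k * c + (j - 1) mod (2 * k)" by simp
      moreover have "(j - 1) mod (2 * k) < 2 * k" using k by simp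
      ultimately show ?thesis by linarith
    next
      case False
      then show ?thesis using c j N by (simp add: algebra_simps)
    qed
    with lower show "j \<in> {2 * k * c + 1 ..< 2 * k * c + 2 * k + 2}" by simp
  qed
  from card_mono[OF _ this] show ?thesis by simp
qed

lemma last_clique_of_join_graph:
  assumes k: "1 \<le> k" and N: "N = 2 * (p + 1) * k + 2"
  shows "N - 2 \<in> clique_class N (clique_of k p) (N - 1)"
proof -
  have "p \<le> (j - 1) div (2 * k)" if "N - 2 \<le> j" for j
    using k N that by (subst less_eq_div_iff_mult_less_eq) (auto simp: algebra_simps)
  then show ?thesis
    using k N unfolding clique_class_def clique_of_def by (simp add: min_absorb2)
qed

lemma large_eigenvalue_contradicts_bound:
  fixes l n k :: real
  assumes "2 \<le> k" "6 * k + 13 \<le> n" "n + 2 * k - 2 \<le> l"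
  shows "n - 1 < (l - n + 1) * (l + 1 - 2 * (2 * k + 1))"
proof -
  have "3 * (n - 2 * k - 3) \<le> (l - n + 1) * (l + 1 - 2 * (2 * k + 1))"
    using assms by (intro mult_mono) auto
  moreover have "n - 1 < 3 * (n - 2 * k - 3)" using assms by (simp add: algebra_simps)
  ultimately show ?thesis by linarith
qed

theorem corollary1:
  fixes k p n :: nat
  assumes "k \<ge> 2"
    and "n = 2 * (p + 1) * k + 2"
    and "n \<ge> 6 * k + 13"
  shows "q_index n (join_graph k p) < real n + 2 * real k - 2"
  unfolding join_graph_eq_cone_of_cliques
proof (rule q_index_less)
  have "n - 2 \<in> clique_class n (clique_of k p) (n - 1)"
    using assms by (intro last_clique_of_join_graph) auto
  then show "eigenvalue (signless_laplacian n (cone_of_cliques (clique_of k p)))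
      (real (card (clique_class n (clique_of k p) (n - 1))) - 1)"
    using assms by (intro cone_of_cliques_eigenvalue_clique_pair) auto
next
  fix l assume ev: "eigenvalue (signless_laplacian n (cone_of_cliques (clique_of k p))) l"
  show "l < real n + 2 * real k - 2"
  proof (rule ccontr)
    assume "\<not> l < real n + 2 * real k - 2"
    then have large: "real n + 2 * real k - 2 \<le> l" by simp
    have card: "card (clique_class n (clique_of k p) i) \<le> 2 * k + 1" for i
      using assms by (intro card_clique_class_join_graph) auto
    have n: "6 * real k + 13 \<le> real n" using assms(3) by linarith
    then have "2 * real (2 * k + 1) < l + 1" using large by simp
    from cone_of_cliques_eigenvalue_bound[OF ev card this]
    have "(l - real n + 1) * (l + 1 - 2 * (2 * real k + 1)) \<le> real n - 1" by simp
    moreover have "real n - 1 < (l - real n + 1) * (l + 1 - 2 * (2 * real k + 1))"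
      using assms(1) n large by (intro large_eigenvalue_contradicts_bound) auto
    ultimately show False by linarith
  qed
qed

end
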